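(* A $po$-$\Gamma$-semigroup $M$ is right regular if and only if for every fuzzy subset $f$ of $M$ we have $f\preceq (f\circ f)\circ 1$.
   Context: Let $M$ and $\Gamma$ be nonempty sets with a map $M\times\Gamma\times M\to M$, $(a,\gamma,b)\mapsto a\gamma b$, satisfying $(a\gamma b)\mu c=a\gamma(b\mu c)$ for all $a,b,c\in M$, $\gamma,\mu\in\Gamma$. A $po$-$\Gamma$-semigroup is such an $M$ with a partial order $\le$ such that $a\le b$ implies $a\gamma c\le b\gamma c$ and $c\gamma a\le c\gamma b$ for all $c\in M$, $\gamma\in\Gamma$. For $H\subseteq M$, $(H]=\{t\in M: t\le h \text{ for some } h\in H\}$; $a\Gamma a\Gamma M=\{a\gamma a\mu x: x\in M,\gamma,\mu\in\Gamma\}$. $M$ is right regular if $a\in(a\Gamma a\Gamma M]$ for every $a\in M$. A fuzzy subset of $M$ is a map $M\to[0,1]$; $1$ is the constant fuzzy subset with value $1$. For $c\in M$ let $A_c=\{(y,z)\in M\times M: c\le y\gamma z \text{ for some }\gamma\in\Gamma\}$. $(f\circ g)(c)=\bigvee_{(y,z)\in A_c}\min\{f(y),g(z)\}$ if $A_c\ne\emptyset$, and $0$ otherwise. $f\preceq g$ means $f(c)\le g(c)$ for all $c\in M$. *)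

theory Defs
  imports Complex_Main
begin

(* A po-Gamma-semigroup: carrier = UNIV of type 'm, Gamma = UNIV of type 'g
   (HOL types are nonempty), ternary operation op, partial order le. *)
definition po_gamma_semigroup ::
  "('m \<Rightarrow> 'g \<Rightarrow> 'm \<Rightarrow> 'm) \<Rightarrow> ('m \<Rightarrow> 'm \<Rightarrow> bool) \<Rightarrow> bool" where
  "po_gamma_semigroup op le \<longleftrightarrow>
     (\<forall>a b c \<gamma> \<mu>. op (op a \<gamma> b) \<mu> c = op a \<gamma> (op b \<mu> c)) \<and>
     (\<forall>a. le a a) \<and>
     (\<forall>a b. le a b \<and> le b a \<longrightarrow> a = b) \<and>
     (\<forall>a b c. le a b \<and> le b c \<longrightarrow> le a c) \<and>
     (\<forall>a b c \<gamma>. le a b \<longrightarrow> le (op a \<gamma> c) (op b \<gamma> c) \<and> le (op c \<gamma> a) (op c \<gamma> b))"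

definition down_closure :: "('m \<Rightarrow> 'm \<Rightarrow> bool) \<Rightarrow> 'm set \<Rightarrow> 'm set" where
  "down_closure le H = {t. \<exists>h\<in>H. le t h}"

definition aGaGM :: "('m \<Rightarrow> 'g \<Rightarrow> 'm \<Rightarrow> 'm) \<Rightarrow> 'm \<Rightarrow> 'm set" where
  "aGaGM op a = {op (op a \<gamma> a) \<mu> x | x \<gamma> \<mu>. True}"

definition right_regular ::
  "('m \<Rightarrow> 'g \<Rightarrow> 'm \<Rightarrow> 'm) \<Rightarrow> ('m \<Rightarrow> 'm \<Rightarrow> bool) \<Rightarrow> bool" where
  "right_regular op le \<longleftrightarrow> (\<forall>a. a \<in> down_closure le (aGaGM op a))"

definition fuzzy_subset :: "('m \<Rightarrow> real) \<Rightarrow> bool" where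
  "fuzzy_subset f \<longleftrightarrow> (\<forall>x. 0 \<le> f x \<and> f x \<le> 1)"

definition A_set :: "('m \<Rightarrow> 'g \<Rightarrow> 'm \<Rightarrow> 'm) \<Rightarrow> ('m \<Rightarrow> 'm \<Rightarrow> bool) \<Rightarrow> 'm \<Rightarrow> ('m \<times> 'm) set" where
  "A_set op le c = {(y, z). \<exists>\<gamma>. le c (op y \<gamma> z)}"

(* fuzzy product f o g; the supremum is the real Sup of a nonempty set bounded by 1 *)
definition fuzzy_comp ::
  "('m \<Rightarrow> 'g \<Rightarrow> 'm \<Rightarrow> 'm) \<Rightarrow> ('m \<Rightarrow> 'm \<Rightarrow> bool) \<Rightarrow> ('m \<Rightarrow> real) \<Rightarrow> ('m \<Rightarrow> real) \<Rightarrow> 'm \<Rightarrow> real" where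
  "fuzzy_comp op le f g c =
     (if A_set op le c \<noteq> {}
      then Sup ((\<lambda>(y, z). min (f y) (g z)) ` A_set op le c)
      else 0)"

definition fuzzy_le :: "('m \<Rightarrow> real) \<Rightarrow> ('m \<Rightarrow> real) \<Rightarrow> bool" where
  "fuzzy_le f g \<longleftrightarrow> (\<forall>c. f c \<le> g c)"

end

theory Submission
  imports Defs
begin

text \<open>Testing \<open>f \<preceq> (f \<circ> f) \<circ> 1\<close> at \<open>a\<close> with the characteristic function of \<open>{a}\<close>
  forces a chain \<open>a \<le> y \<mu> z\<close>, \<open>y \<le> a \<gamma> a\<close>, i.e. \<open>a \<le> a \<gamma> a \<mu> z\<close>, which is right
  regularity at \<open>a\<close>. Conversely, if \<open>a \<le> a \<gamma> a \<mu> x\<close> then the pairs \<open>(a, a)\<close> and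
  \<open>(a \<gamma> a, x)\<close> witness \<open>f a \<le> (f \<circ> f)(a \<gamma> a)\<close> and \<open>(f \<circ> f)(a \<gamma> a) \<le> ((f \<circ> f) \<circ> 1)(a)\<close>.\<close>

lemma mem_A_set_iff [simp]: "(y, z) \<in> A_set op le c \<longleftrightarrow> (\<exists>\<gamma>. le c (op y \<gamma> z))"
  by (simp add: A_set_def)

lemma fuzzy_comp_ge:
  assumes "\<forall>x. f x \<le> 1" and "(y, z) \<in> A_set op le c"
  shows "min (f y) (g z) \<le> fuzzy_comp op le f g c"
proof -
  let ?S = "(\<lambda>(y, z). min (f y) (g z)) ` A_set op le c"
  have "bdd_above ?S"
    by (rule bdd_aboveI[where M = 1]) (use assms(1) in \<open>auto simp: min_le_iff_disj\<close>)
  then have "min (f y) (g z) \<le> Sup ?S"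
    by (rule cSup_upper[rotated]) (use assms(2) in force)
  with assms(2) show ?thesis
    unfolding fuzzy_comp_def by (auto simp del: mem_A_set_iff)
qed

lemma fuzzy_comp_le_1:
  assumes "\<forall>x. f x \<le> 1"
  shows "fuzzy_comp op le f g c \<le> 1"
proof (cases "A_set op le c = {}")
  case False
  have "Sup ((\<lambda>(y, z). min (f y) (g z)) ` A_set op le c) \<le> 1"
    by (rule cSup_least) (use False assms in \<open>auto simp: min_le_iff_disj\<close>)
  with False show ?thesis unfolding fuzzy_comp_def by simp
qed (simp add: fuzzy_comp_def)

lemma fuzzy_comp_pos_imp_witness:
  assumes "fuzzy_comp op le f g c > 0"
  obtains y z where "(y, z) \<in> A_set op le c" and "f y > 0" and "g z > 0"
proof -
  let ?S = "(\<lambda>(y, z). min (f y) (g z)) ` A_set op le c"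
  have ne: "A_set op le c \<noteq> {}"
    using assms by (auto simp: fuzzy_comp_def)
  have "\<exists>(y, z) \<in> A_set op le c. min (f y) (g z) > 0"
  proof (rule ccontr)
    assume "\<not> ?thesis"
    then have "Sup ?S \<le> 0"
      using ne by (intro cSup_least) (auto simp: not_less)
    with assms ne show False unfolding fuzzy_comp_def by simp
  qed
  then show ?thesis using that by auto
qed

lemma right_regular_at_imp_fuzzy_le:
  assumes refl: "\<And>b. le b b"
    and a: "le a (op (op a \<gamma> a) \<mu> x)"
    and f1: "\<forall>x. f x \<le> 1"
  shows "f a \<le> fuzzy_comp op le (fuzzy_comp op le f f) (\<lambda>_. 1) a"
proof -
  have "f a \<le> fuzzy_comp op le f f (op a \<gamma> a)"
    using fuzzy_comp_ge[OF f1, of a a op le "op a \<gamma> a" f] refl[of "op a \<gamma> a"] by auto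
  also have "\<dots> = min (fuzzy_comp op le f f (op a \<gamma> a)) 1"
    using fuzzy_comp_le_1[OF f1, of op le f "op a \<gamma> a"] by simp
  also have "\<dots> \<le> fuzzy_comp op le (fuzzy_comp op le f f) (\<lambda>_. 1) a"
    using fuzzy_comp_le_1[OF f1] a by (intro fuzzy_comp_ge) auto
  finally show ?thesis .
qed

lemma fuzzy_comp_singleton_pos_imp_right_regular_at:
  assumes "po_gamma_semigroup op le"
    and pos: "fuzzy_comp op le (fuzzy_comp op le f f) (\<lambda>_. 1) a > 0"
    and f: "\<And>x. f x > 0 \<Longrightarrow> x = a"
  shows "a \<in> down_closure le (aGaGM op a)"
proof -
  obtain y z where yz: "(y, z) \<in> A_set op le a" and y: "fuzzy_comp op le f f y > 0"
    using fuzzy_comp_pos_imp_witness[OF pos] by blast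
  obtain \<mu> where a: "le a (op y \<mu> z)"
    using yz by auto
  obtain u v where uv: "(u, v) \<in> A_set op le y" and "f u > 0" and "f v > 0"
    using fuzzy_comp_pos_imp_witness[OF y] by blast
  then have "u = a" and "v = a"
    using f by blast+
  with uv obtain \<gamma> where "le y (op a \<gamma> a)"
    by auto
  then have "le a (op (op a \<gamma> a) \<mu> z)"
    using a assms(1) unfolding po_gamma_semigroup_def by blast
  moreover have "op (op a \<gamma> a) \<mu> z \<in> aGaGM op a"
    unfolding aGaGM_def by blast
  ultimately show ?thesis
    unfolding down_closure_def by blast
qed

theorem theorem26:
  fixes op :: "'m \<Rightarrow> 'g \<Rightarrow> 'm \<Rightarrow> 'm" and le :: "'m \<Rightarrow> 'm \<Rightarrow> bool"
  assumes "po_gamma_semigroup op le"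
  shows "right_regular op le \<longleftrightarrow>
    (\<forall>f. fuzzy_subset f \<longrightarrow>
       fuzzy_le f (fuzzy_comp op le (fuzzy_comp op le f f) (\<lambda>_. 1)))"
proof (intro iffI allI impI)
  fix f :: "'m \<Rightarrow> real"
  assume rr: "right_regular op le" and "fuzzy_subset f"
  then have f1: "\<forall>x. f x \<le> 1" by (simp add: fuzzy_subset_def)
  have refl: "\<And>b. le b b" using assms by (simp add: po_gamma_semigroup_def)
  show "fuzzy_le f (fuzzy_comp op le (fuzzy_comp op le f f) (\<lambda>_. 1))"
    unfolding fuzzy_le_def
  proof
    fix a
    obtain x \<gamma> \<mu> where "le a (op (op a \<gamma> a) \<mu> x)"
      using rr unfolding right_regular_def down_closure_def aGaGM_def by blast
    then show "f a \<le> fuzzy_comp op le (fuzzy_comp op le f f) (\<lambda>_. 1) a"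
      by (rule right_regular_at_imp_fuzzy_le[OF refl _ f1])
  qed
next
  assume H: "\<forall>f. fuzzy_subset f \<longrightarrow>
       fuzzy_le f (fuzzy_comp op le (fuzzy_comp op le f f) (\<lambda>_. 1))"
  show "right_regular op le"
    unfolding right_regular_def
  proof
    fix a :: 'm
    define f where "f = (\<lambda>x. if x = a then 1 else (0::real))"
    have "fuzzy_subset f" by (simp add: f_def fuzzy_subset_def)
    with H have "f a \<le> fuzzy_comp op le (fuzzy_comp op le f f) (\<lambda>_. 1) a"
      by (simp add: fuzzy_le_def)
    then have "fuzzy_comp op le (fuzzy_comp op le f f) (\<lambda>_. 1) a > 0"
      by (simp add: f_def)
    moreover have "\<And>x. f x > 0 \<Longrightarrow> x = a"
      by (simp add: f_def split: if_splits)
    ultimately show "a \<in> down_closure le (aGaGM op a)"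
      by (rule fuzzy_comp_singleton_pos_imp_right_regular_at[OF assms])
  qed
qed

end
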